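(* For a facility location problem with $n$ agents, the Leftmost mechanism $n$-approximates the complemented Gini index of utilities.
   Context: One facility is located on $[0,1]$; $n$ agents have locations $x_1\le\dots\le x_n$ in $[0,1]$. For a facility at $y$, agent $i$ has distance $d_i=|x_i-y|$ and utility $u_i=1-d_i$. The Gini index of utilities is $G_u=\frac{\sum_i\sum_j|u_i-u_j|}{2n\sum_i u_i}$ and the complemented Gini index is $1-G_u$. The Leftmost mechanism locates the facility at $x_1$. For a mechanism $M$ and a maximization objective $O$, the approximation ratio (over profiles with $n$ agents) is the supremum over all profiles $x\in[0,1]^n$ of $\mathrm{OPT}(x)/O(M(x))$, where $\mathrm{OPT}(x)=\max_{y\in[0,1]}O(y)$; $M$ "$\alpha$-approximates" $O$ if this approximation ratio equals $\alpha$. *)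

theory Defs
  imports Complex_Main
begin

definition profiles :: "nat \<Rightarrow> (nat \<Rightarrow> real) set" where
  "profiles n = {x. \<forall>i<n. x i \<in> {0..1}}"

definition utility :: "(nat \<Rightarrow> real) \<Rightarrow> real \<Rightarrow> nat \<Rightarrow> real" where
  "utility x y i = 1 - \<bar>x i - y\<bar>"

definition gini_util :: "nat \<Rightarrow> (nat \<Rightarrow> real) \<Rightarrow> real \<Rightarrow> real" where
  "gini_util n x y =
     (\<Sum>i<n. \<Sum>j<n. \<bar>utility x y i - utility x y j\<bar>) /
     (2 * real n * (\<Sum>i<n. utility x y i))"

definition comp_gini_util :: "nat \<Rightarrow> (nat \<Rightarrow> real) \<Rightarrow> real \<Rightarrow> real" where
  "comp_gini_util n x y = 1 - gini_util n x y"

definition opt_comp_gini :: "nat \<Rightarrow> (nat \<Rightarrow> real) \<Rightarrow> real" where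
  "opt_comp_gini n x = (SUP y\<in>{0..1}. comp_gini_util n x y)"

definition leftmost :: "nat \<Rightarrow> (nat \<Rightarrow> real) \<Rightarrow> real" where
  "leftmost n x = Min (x ` {..<n})"

definition leftmost_ratio_comp_gini :: "nat \<Rightarrow> real" where
  "leftmost_ratio_comp_gini n =
     (SUP x\<in>profiles n. opt_comp_gini n x / comp_gini_util n x (leftmost n x))"

end

theory Submission
  imports Defs
begin

text \<open>Writing \<open>\<bar>a - b\<bar> = a + b - 2 min a b\<close> and using \<open>\<Sum>\<^sub>j min u\<^sub>i u\<^sub>j \<ge> u\<^sub>i\<close>, the sum of
  all pairwise differences of \<open>n\<close> nonnegative utilities is at most \<open>2 (n - 1)\<close> times their
  sum. Hence the Gini index never exceeds \<open>(n - 1) / n\<close>, and the complemented Gini index of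
  any facility location, in particular of the Leftmost one, is at least \<open>1 / n\<close>, while the
  optimum is at most \<open>1\<close>. Equality is attained by the profile with one agent at \<open>0\<close> and the
  others at \<open>1\<close>: Leftmost gives utilities \<open>1, 0, \<dots>, 0\<close> with Gini index exactly \<open>(n - 1) / n\<close>,
  whereas the facility at \<open>1/2\<close> equalises all utilities.\<close>

lemma sum_abs_diff_le:
  fixes u :: "'a \<Rightarrow> real"
  assumes "finite A" and nonneg: "\<And>i. i \<in> A \<Longrightarrow> u i \<ge> 0"
  shows "(\<Sum>i\<in>A. \<Sum>j\<in>A. \<bar>u i - u j\<bar>) \<le> 2 * (real (card A) - 1) * sum u A"
proof -
  have min_sum: "u i \<le> (\<Sum>j\<in>A. min (u i) (u j))" if "i \<in> A" for i
    using member_le_sum[of i A "\<lambda>j. min (u i) (u j)"] that nonneg \<open>finite A\<close> by auto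
  have "(\<Sum>i\<in>A. \<Sum>j\<in>A. \<bar>u i - u j\<bar>) = (\<Sum>i\<in>A. \<Sum>j\<in>A. u i + u j - 2 * min (u i) (u j))"
    by (intro sum.cong) auto
  also have "\<dots> = (\<Sum>i\<in>A. real (card A) * u i + sum u A - 2 * (\<Sum>j\<in>A. min (u i) (u j)))"
    by (simp add: sum.distrib sum_subtractf sum_distrib_left)
  also have "\<dots> \<le> (\<Sum>i\<in>A. real (card A) * u i + sum u A - 2 * u i)"
    by (intro sum_mono) (use min_sum in auto)
  also have "\<dots> = 2 * (real (card A) - 1) * sum u A"
    by (simp add: sum.distrib sum_subtractf sum_distrib_left[symmetric]
        sum_distrib_right[symmetric] algebra_simps)
  finally show ?thesis .
qed

lemma sum_abs_diff_indicator:
  fixes k :: 'a and \<delta> :: "'a \<Rightarrow> real"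
  defines "\<delta> \<equiv> \<lambda>i. if i = k then 1 else 0"
  assumes "finite A" "k \<in> A"
  shows "(\<Sum>i\<in>A. \<Sum>j\<in>A. \<bar>\<delta> i - \<delta> j\<bar>) = 2 * (real (card A) - 1)"
proof -
  have sum_\<delta>: "sum \<delta> A = 1"
    using assms by (simp add: \<delta>_def)
  have "(\<Sum>i\<in>A. \<Sum>j\<in>A. \<bar>\<delta> i - \<delta> j\<bar>) = (\<Sum>i\<in>A. \<Sum>j\<in>A. \<delta> i + \<delta> j - 2 * (\<delta> i * \<delta> j))"
    by (intro sum.cong) (auto simp: \<delta>_def)
  also have "\<dots> = (\<Sum>i\<in>A. real (card A) * \<delta> i + sum \<delta> A - 2 * (\<delta> i * sum \<delta> A))"
    by (simp add: sum.distrib sum_subtractf sum_distrib_left)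
  also have "\<dots> = 2 * (real (card A) - 1)"
    by (simp add: sum_\<delta> sum.distrib sum_subtractf sum_distrib_left[symmetric])
  finally show ?thesis .
qed

lemma utility_nonneg:
  assumes "x \<in> profiles n" "y \<in> {0..1}" "i < n"
  shows "utility x y i \<ge> 0"
  using assms unfolding profiles_def utility_def by auto

lemma gini_util_nonneg:
  assumes "x \<in> profiles n" "y \<in> {0..1}"
  shows "gini_util n x y \<ge> 0"
  using assms unfolding gini_util_def
  by (intro divide_nonneg_nonneg mult_nonneg_nonneg sum_nonneg) (auto simp: utility_nonneg)

lemma gini_util_le:
  assumes "x \<in> profiles n" "y \<in> {0..1}" "n \<ge> 1"
  shows "gini_util n x y \<le> (real n - 1) / real n"
proof -
  let ?S = "\<Sum>i<n. utility x y i"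
  have "?S \<ge> 0"
    by (intro sum_nonneg) (use assms utility_nonneg in auto)
  have "(\<Sum>i<n. \<Sum>j<n. \<bar>utility x y i - utility x y j\<bar>) \<le> 2 * (real n - 1) * ?S"
    using sum_abs_diff_le[of "{..<n}" "utility x y"] assms utility_nonneg by auto
  then have "gini_util n x y \<le> 2 * (real n - 1) * ?S / (2 * real n * ?S)"
    unfolding gini_util_def using \<open>?S \<ge> 0\<close> by (intro divide_right_mono) auto
  also have "\<dots> \<le> (real n - 1) / real n"
    \<comment> \<open>if all utilities vanish, both the Gini index and this bound are \<open>0\<close> by \<open>x / 0 = 0\<close>\<close>
    using \<open>n \<ge> 1\<close> by (cases "?S = 0") (auto simp: field_simps)
  finally show ?thesis .
qed

lemma comp_gini_util_ge:
  assumes "x \<in> profiles n" "y \<in> {0..1}" "n \<ge> 1"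
  shows "comp_gini_util n x y \<ge> 1 / real n"
  using gini_util_le[OF assms] \<open>n \<ge> 1\<close> by (simp add: comp_gini_util_def diff_divide_distrib)

lemma opt_comp_gini_le_1:
  assumes "x \<in> profiles n"
  shows "opt_comp_gini n x \<le> 1"
  unfolding opt_comp_gini_def comp_gini_util_def
  by (rule cSUP_least) (use assms gini_util_nonneg in auto)

lemma opt_comp_gini_eq_1:
  assumes "x \<in> profiles n" "y \<in> {0..1}" and equal: "\<And>i. i < n \<Longrightarrow> utility x y i = c"
  shows "opt_comp_gini n x = 1"
proof (rule antisym)
  show "opt_comp_gini n x \<le> 1"
    using opt_comp_gini_le_1[OF assms(1)] .
  have "comp_gini_util n x y = 1"
    using equal by (simp add: comp_gini_util_def gini_util_def)
  moreover have "comp_gini_util n x y \<le> opt_comp_gini n x"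
    unfolding opt_comp_gini_def comp_gini_util_def using assms gini_util_nonneg
    by (intro cSUP_upper bdd_aboveI2[where M = 1]) auto
  ultimately show "1 \<le> opt_comp_gini n x"
    by simp
qed

lemma leftmost_mem:
  assumes "x \<in> profiles n" "n \<ge> 1"
  shows "leftmost n x \<in> x ` {..<n}"
  unfolding leftmost_def using assms by (intro Min_in) (auto simp: lessThan_empty_iff)

lemma leftmost_ratio_le:
  assumes "x \<in> profiles n" "n \<ge> 1"
  shows "opt_comp_gini n x / comp_gini_util n x (leftmost n x) \<le> real n"
proof -
  let ?c = "comp_gini_util n x (leftmost n x)"
  have "leftmost n x \<in> {0..1}"
    using leftmost_mem[OF assms] assms(1) by (auto simp: profiles_def)
  then have lower: "1 / real n \<le> ?c"
    using comp_gini_util_ge assms by blast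
  have n_pos: "real n > 0"
    using assms(2) by simp
  then have "0 < ?c"
    using lower by (meson divide_pos_pos less_le_trans zero_less_one)
  moreover have "opt_comp_gini n x \<le> real n * ?c"
    using opt_comp_gini_le_1[OF assms(1)] lower n_pos by (simp add: divide_le_eq mult.commute)
  ultimately show ?thesis
    by (simp add: pos_divide_le_eq mult.commute)
qed

definition one_left_profile :: "nat \<Rightarrow> real" where
  "one_left_profile i = (if i = 0 then 0 else 1)"

lemma one_left_profile_in_profiles: "one_left_profile \<in> profiles n"
  by (simp add: profiles_def one_left_profile_def)

lemma leftmost_one_left_profile:
  assumes "n \<ge> 1"
  shows "leftmost n one_left_profile = 0"
proof -
  have "leftmost n one_left_profile \<in> {0, 1}"
    using leftmost_mem[OF one_left_profile_in_profiles assms] by (auto simp: one_left_profile_def)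
  moreover have "leftmost n one_left_profile \<le> one_left_profile 0"
    unfolding leftmost_def using assms by (intro Min_le) auto
  ultimately show ?thesis
    by (auto simp: one_left_profile_def)
qed

lemma leftmost_ratio_one_left_profile:
  assumes "n \<ge> 1"
  shows "opt_comp_gini n one_left_profile / comp_gini_util n one_left_profile (leftmost n one_left_profile)
    = real n"
proof -
  have indicator: "utility one_left_profile 0 i = (if i = 0 then 1 else 0)" for i
    by (simp add: utility_def one_left_profile_def)
  have pairs: "(\<Sum>i<n. \<Sum>j<n. \<bar>utility one_left_profile 0 i - utility one_left_profile 0 j\<bar>)
      = 2 * (real n - 1)"
    using sum_abs_diff_indicator[of "{..<n}" 0] assms by (simp add: indicator)
  have total: "(\<Sum>i<n. utility one_left_profile 0 i) = 1"
    using assms by (simp add: indicator)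
  have "comp_gini_util n one_left_profile 0 = 1 / real n"
    unfolding comp_gini_util_def gini_util_def pairs total using assms by (simp add: field_simps)
  moreover have "opt_comp_gini n one_left_profile = 1"
    by (rule opt_comp_gini_eq_1[where y = "1/2" and c = "1/2"])
      (auto simp: one_left_profile_in_profiles utility_def one_left_profile_def)
  ultimately show ?thesis
    using leftmost_one_left_profile[OF assms] by simp
qed

theorem theorem2:
  fixes n :: nat
  assumes "n \<ge> 1"
  shows "leftmost_ratio_comp_gini n = real n"
  unfolding leftmost_ratio_comp_gini_def
proof (rule antisym)
  show "(SUP x\<in>profiles n. opt_comp_gini n x / comp_gini_util n x (leftmost n x)) \<le> real n"
    using leftmost_ratio_le assms by (intro cSUP_least) (auto simp: profiles_def)
  show "real n \<le> (SUP x\<in>profiles n. opt_comp_gini n x / comp_gini_util n x (leftmost n x))"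
    unfolding leftmost_ratio_one_left_profile[OF assms, symmetric]
    using leftmost_ratio_le assms one_left_profile_in_profiles
    by (intro cSUP_upper bdd_aboveI2[where M = "real n"]) auto
qed

end
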